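(* For every integer $n\ge1$ and every $u\in V$, the normalizing factor satisfies $Z_u<\dfrac{1}{\ln(n+1)}$.
   Context: For an integer $n\ge1$, the $n$-octahedral graph $G'_n=(V,E')$ is the undirected graph with vertex set $V=\{u\in\mathbb{Z}^3:|u_1|+|u_2|+|u_3|=n\}$ and edge set $E'=\{\{v,w\}\subset V: v\neq w,\ |v_i-w_i|\le 1 \text{ for all } i=1,2,3\}$. For $u,v\in V$, $d_{uv}$ denotes the shortest-path (number of edges) distance between $u$ and $v$ in $G'_n$. For $u\in V$, $Z_u=\left(\sum_{w\in V\setminus\{u\}} d_{uw}^{-2}\right)^{-1}$. *)

theory Defs
  imports "HOL-Analysis.Analysis"
begin

type_synonym pt = "int \<times> int \<times> int"

definition oct_V :: "nat \<Rightarrow> pt set" where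
  "oct_V n = {(a, b, c). \<bar>a\<bar> + \<bar>b\<bar> + \<bar>c\<bar> = int n}"

definition oct_adj :: "nat \<Rightarrow> pt \<Rightarrow> pt \<Rightarrow> bool" where
  "oct_adj n v w \<longleftrightarrow> v \<in> oct_V n \<and> w \<in> oct_V n \<and> v \<noteq> w \<and>
     \<bar>fst v - fst w\<bar> \<le> 1 \<and> \<bar>fst (snd v) - fst (snd w)\<bar> \<le> 1 \<and>
     \<bar>snd (snd v) - snd (snd w)\<bar> \<le> 1"

inductive oct_walk :: "nat \<Rightarrow> nat \<Rightarrow> pt \<Rightarrow> pt \<Rightarrow> bool" for n where
  nil: "v \<in> oct_V n \<Longrightarrow> oct_walk n 0 v v"
| step: "oct_adj n v x \<Longrightarrow> oct_walk n k x w \<Longrightarrow> oct_walk n (Suc k) v w"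

definition oct_dist :: "nat \<Rightarrow> pt \<Rightarrow> pt \<Rightarrow> nat" where
  "oct_dist n v w = (LEAST k. oct_walk n k v w)"

definition oct_Z :: "nat \<Rightarrow> pt \<Rightarrow> real" where
  "oct_Z n u = inverse (\<Sum>w\<in>oct_V n - {u}. 1 / (real (oct_dist n u w))^2)"

end

theory Submission
  imports Defs
begin

text \<open>
  Write \<open>u = (a, b, c)\<close>. Decreasing \<open>|a|\<close> by \<open>s\<close> while increasing \<open>|b|\<close> and \<open>|c|\<close>
  by a total of \<open>s\<close> (keeping signs) gives \<open>s + 1\<close> vertices within distance \<open>s\<close> of \<open>u\<close>,
  for \<open>s = 1, \<dots>, |a|\<close>; together with the analogous families for the other two
  coordinates, which are pairwise disjoint, this yields
  \<open>1/Z\<^sub>u \<ge> f |a| + f |b| + f |c|\<close> with \<open>f m = \<Sum>s=1..m. (s + 1)/s\<^sup>2 \<ge> ln (m + 1) + [m \<ge> 1]\<close>.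
  Since \<open>n + 1 \<le> (|a| + 1)(|b| + 1)(|c| + 1)\<close> and some coordinate is nonzero,
  \<open>1/Z\<^sub>u > ln (n + 1)\<close>.
\<close>

lemma oct_walk_in_oct_V: "oct_walk n k v w \<Longrightarrow> v \<in> oct_V n \<and> w \<in> oct_V n"
  by (induction rule: oct_walk.induct) (auto simp: oct_adj_def)

lemma oct_walk_snoc: "oct_walk n k v x \<Longrightarrow> oct_adj n x w \<Longrightarrow> oct_walk n (Suc k) v w"
  by (induction rule: oct_walk.induct) (meson oct_adj_def oct_walk.intros)+

lemma inverse_square_le_inverse_square_oct_dist:
  assumes "oct_walk n k u w" and "u \<noteq> w"
  shows "1 / (real k)^2 \<le> 1 / (real (oct_dist n u w))^2"
proof -
  have "oct_walk n (oct_dist n u w) u w"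
    unfolding oct_dist_def by (rule LeastI[of "\<lambda>k. oct_walk n k u w", OF assms(1)])
  moreover have "\<not> oct_walk n 0 u w"
    using assms(2) by (auto elim: oct_walk.cases)
  ultimately have "1 \<le> oct_dist n u w"
    by (cases "oct_dist n u w") auto
  moreover have "oct_dist n u w \<le> k"
    unfolding oct_dist_def by (rule Least_le) (fact assms(1))
  ultimately show ?thesis
    by (simp add: frac_le power_mono)
qed

lemma oct_V_finite: "finite (oct_V n)"
proof (rule finite_subset)
  show "oct_V n \<subseteq> {-int n..int n} \<times> {-int n..int n} \<times> {-int n..int n}"
    by (auto simp: oct_V_def)
qed simp

fun rot :: "pt \<Rightarrow> pt" where
  "rot (x, y, z) = (y, z, x)"

lemma inj_rot: "inj rot"
  by (auto simp: inj_def)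

lemma oct_adj_rot: "oct_adj n v w \<Longrightarrow> oct_adj n (rot v) (rot w)"
  by (cases v; cases w) (auto simp: oct_adj_def oct_V_def)

lemma oct_walk_rot: "oct_walk n k v w \<Longrightarrow> oct_walk n k (rot v) (rot w)"
proof (induction rule: oct_walk.induct)
  case (nil v)
  then show ?case
    by (cases v) (auto simp: oct_V_def intro: oct_walk.nil)
next
  case (step v x k w)
  then show ?case
    by (blast intro: oct_walk.step oct_adj_rot)
qed

text \<open>Unlike \<^const>\<open>sgn\<close>, this is never \<open>0\<close>: a zero coordinate may grow in the positive direction.\<close>
definition outward :: "int \<Rightarrow> int" where
  "outward x = (if x < 0 then -1 else 1)"

lemma outward_mult_abs [simp]: "outward x * \<bar>x\<bar> = x"
  by (simp add: outward_def)

lemma abs_outward_mult [simp]: "\<bar>outward x * y\<bar> = \<bar>y\<bar>"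
  by (simp add: outward_def)

lemma outward_mult_cancel [simp]: "outward x * y = outward x * z \<longleftrightarrow> y = z"
  by (simp add: outward_def)

lemma outward_nonzero [simp]: "outward x \<noteq> 0"
  by (simp add: outward_def)

lemma abs_outward_mult_diff [simp]: "\<bar>outward x * y - outward x * z\<bar> = \<bar>y - z\<bar>"
  by (metis right_diff_distrib abs_outward_mult)

fun descend :: "pt \<Rightarrow> nat \<times> nat \<Rightarrow> pt" where
  "descend (a, b, c) (s, p) =
     (outward a * (\<bar>a\<bar> - int s), outward b * (\<bar>b\<bar> + int p), outward c * (\<bar>c\<bar> + int s - int p))"

lemma inj_descend: "inj (descend u)"
  by (cases u) (auto simp: inj_def)

lemma oct_walk_descend:
  assumes u: "(a, b, c) \<in> oct_V n"
  shows "s \<le> nat \<bar>a\<bar> \<Longrightarrow> p \<le> s \<Longrightarrow> oct_walk n s (a, b, c) (descend (a, b, c) (s, p))"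
proof (induction s arbitrary: p)
  case 0
  then show ?case
    using u by (simp add: oct_walk.nil)
next
  case (Suc s)
  have in_V: "descend (a, b, c) (t, q) \<in> oct_V n" if "t \<le> Suc s" "q \<le> t" for t q
    using u Suc.prems that by (auto simp: oct_V_def)
  show ?case
  proof (cases p)
    case 0
    have "oct_adj n (descend (a, b, c) (s, 0)) (descend (a, b, c) (Suc s, 0))"
      using in_V[of s 0] in_V[of "Suc s" 0] unfolding oct_adj_def by auto
    then show ?thesis
      using Suc 0 oct_walk_snoc by fastforce
  next
    case (Suc q)
    have "oct_adj n (descend (a, b, c) (s, q)) (descend (a, b, c) (Suc s, p))"
      using in_V[of s q] in_V[of "Suc s" p] Suc.prems Suc
      unfolding oct_adj_def by (auto simp del: of_nat_Suc)
    then show ?thesis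
      using Suc.IH[of q] Suc.prems Suc oct_walk_snoc by fastforce
  qed
qed

text \<open>Index \<open>(s, p)\<close> stands for the \<open>s + 1\<close> vertices of a family at distance at most \<open>s\<close>.\<close>
definition layers :: "nat \<Rightarrow> (nat \<times> nat) set" where
  "layers m = Sigma {1..m} (\<lambda>s. {0..s})"

lemma abs_descend:
  assumes "(s, p) \<in> layers (nat \<bar>a\<bar>)" and "descend (a, b, c) (s, p) = (x, y, z)"
  shows "\<bar>x\<bar> < \<bar>a\<bar>" "\<bar>b\<bar> \<le> \<bar>y\<bar>" "\<bar>c\<bar> \<le> \<bar>z\<bar>"
  using assms by (auto simp: layers_def)

lemma oct_walk_descend_layers:
  assumes "(a, b, c) \<in> oct_V n" and sp: "(s, p) \<in> layers (nat \<bar>a\<bar>)"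
  shows "oct_walk n s (a, b, c) (descend (a, b, c) (s, p)) \<and> descend (a, b, c) (s, p) \<noteq> (a, b, c)"
proof
  show "oct_walk n s (a, b, c) (descend (a, b, c) (s, p))"
    using oct_walk_descend assms by (auto simp: layers_def)
  show "descend (a, b, c) (s, p) \<noteq> (a, b, c)"
    using abs_descend(1)[OF sp] by (metis less_irrefl prod_cases3)
qed

definition layer_weight :: "nat \<Rightarrow> real" where
  "layer_weight m = (\<Sum>s=1..m. (real s + 1) / (real s)^2)"

lemma layer_weight_ge_ln: "ln (real m + 1) + of_bool (1 \<le> m) \<le> layer_weight m"
proof -
  have "layer_weight m = (\<Sum>s=1..m. inverse (real s) + 1 / (real s)^2)"
    unfolding layer_weight_def by (rule sum.cong) (auto simp: field_simps power2_eq_square)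
  also have "\<dots> = harm m + (\<Sum>s=1..m. 1 / (real s)^2)"
    by (simp add: sum.distrib harm_def)
  finally have weight: "layer_weight m = harm m + (\<Sum>s=1..m. 1 / (real s)^2)" .
  have "of_bool (1 \<le> m) \<le> (\<Sum>s=1..m. 1 / (real s)^2)"
  proof (cases "1 \<le> m")
    case True
    then have "(\<Sum>s\<in>{1}. 1 / (real s)^2) \<le> (\<Sum>s=1..m. 1 / (real s)^2)"
      by (intro sum_mono2) auto
    then show ?thesis
      using True by simp
  qed simp
  with weight ln_le_harm[of m] show ?thesis
    by linarith
qed

lemma layer_weight_le_sum_inverse_square_oct_dist:
  assumes inj: "inj_on F (layers m)"
    and walk: "\<And>s p. (s, p) \<in> layers m \<Longrightarrow> oct_walk n s u (F (s, p)) \<and> F (s, p) \<noteq> u"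
  shows "F ` layers m \<subseteq> oct_V n - {u}"
    and "layer_weight m \<le> (\<Sum>w\<in>F ` layers m. 1 / (real (oct_dist n u w))^2)"
proof -
  show "F ` layers m \<subseteq> oct_V n - {u}"
  proof
    fix w
    assume "w \<in> F ` layers m"
    then obtain s p where "(s, p) \<in> layers m" "w = F (s, p)"
      by (metis imageE surj_pair)
    with walk oct_walk_in_oct_V show "w \<in> oct_V n - {u}"
      by blast
  qed
next
  have "layer_weight m = (\<Sum>s=1..m. \<Sum>p=0..s. 1 / (real s)^2)"
    unfolding layer_weight_def by (rule sum.cong) (simp_all add: add.commute)
  also have "\<dots> = (\<Sum>(s, p)\<in>layers m. 1 / (real s)^2)"
    unfolding layers_def by (subst sum.Sigma) auto
  also have "\<dots> \<le> (\<Sum>(s, p)\<in>layers m. 1 / (real (oct_dist n u (F (s, p))))^2)"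
  proof (intro sum_mono, clarify)
    fix s p
    assume "(s, p) \<in> layers m"
    with walk show "1 / (real s)^2 \<le> 1 / (real (oct_dist n u (F (s, p))))^2"
      by (blast intro: inverse_square_le_inverse_square_oct_dist)
  qed
  also have "\<dots> = (\<Sum>w\<in>F ` layers m. 1 / (real (oct_dist n u w))^2)"
    by (simp add: sum.reindex[OF inj] case_prod_beta' comp_def)
  finally show "layer_weight m \<le> (\<Sum>w\<in>F ` layers m. 1 / (real (oct_dist n u w))^2)" .
qed

lemma layer_weights_le_sum_inverse_square_oct_dist:
  assumes "(a, b, c) \<in> oct_V n"
  shows "layer_weight (nat \<bar>a\<bar>) + layer_weight (nat \<bar>b\<bar>) + layer_weight (nat \<bar>c\<bar>)
    \<le> (\<Sum>w\<in>oct_V n - {(a, b, c)}. 1 / (real (oct_dist n (a, b, c) w))^2)"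
proof -
  let ?u = "(a, b, c)" and ?g = "\<lambda>w. 1 / (real (oct_dist n (a, b, c) w))^2"
  define A B C where "A = nat \<bar>a\<bar>" and "B = nat \<bar>b\<bar>" and "C = nat \<bar>c\<bar>"
  define FA FB FC where "FA = descend (a, b, c)" and "FB = rot \<circ> rot \<circ> descend (b, c, a)"
    and "FC = rot \<circ> descend (c, a, b)"
  have rotated: "(b, c, a) \<in> oct_V n" "(c, a, b) \<in> oct_V n"
    using assms by (auto simp: oct_V_def)
  have walk_A: "oct_walk n s ?u (FA (s, p)) \<and> FA (s, p) \<noteq> ?u" if "(s, p) \<in> layers A" for s p
    using oct_walk_descend_layers[OF assms] that by (simp add: FA_def A_def)
  have walk_B: "oct_walk n s ?u (FB (s, p)) \<and> FB (s, p) \<noteq> ?u" if "(s, p) \<in> layers B" for s p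
    using oct_walk_descend_layers[OF rotated(1)] that oct_walk_rot inj_rot
    by (fastforce simp: FB_def B_def inj_eq)
  have walk_C: "oct_walk n s ?u (FC (s, p)) \<and> FC (s, p) \<noteq> ?u" if "(s, p) \<in> layers C" for s p
    using oct_walk_descend_layers[OF rotated(2)] that oct_walk_rot inj_rot
    by (fastforce simp: FC_def C_def inj_eq)
  have inj: "inj FA" "inj FB" "inj FC"
    using inj_descend inj_rot by (simp_all add: FA_def FB_def FC_def inj_compose)
  have abs_A: "\<bar>x\<bar> < \<bar>a\<bar>" if "(x, y, z) \<in> FA ` layers A" for x y z
    using that abs_descend by (force simp: FA_def A_def)
  have abs_B: "\<bar>a\<bar> \<le> \<bar>x\<bar> \<and> \<bar>y\<bar> < \<bar>b\<bar>" if "(x, y, z) \<in> FB ` layers B" for x y z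
    using that abs_descend by (force simp: FB_def B_def)
  have abs_C: "\<bar>a\<bar> \<le> \<bar>x\<bar> \<and> \<bar>b\<bar> \<le> \<bar>y\<bar>" if "(x, y, z) \<in> FC ` layers C" for x y z
    using that abs_descend by (force simp: FC_def C_def)
  have disjoint_AB: "FA ` layers A \<inter> FB ` layers B = {}"
    unfolding disjoint_iff by (metis abs_A abs_B not_less prod_cases3)
  have disjoint_ABC: "(FA ` layers A \<union> FB ` layers B) \<inter> FC ` layers C = {}"
    unfolding disjoint_iff by (metis Un_iff abs_A abs_B abs_C not_less prod_cases3)
  note layer_A = layer_weight_le_sum_inverse_square_oct_dist[OF inj_on_subset[OF inj(1)] walk_A]
  note layer_B = layer_weight_le_sum_inverse_square_oct_dist[OF inj_on_subset[OF inj(2)] walk_B]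
  note layer_C = layer_weight_le_sum_inverse_square_oct_dist[OF inj_on_subset[OF inj(3)] walk_C]
  have finite: "finite (layers m)" for m
    by (simp add: layers_def)
  have "layer_weight A + layer_weight B + layer_weight C
      \<le> sum ?g (FA ` layers A) + sum ?g (FB ` layers B) + sum ?g (FC ` layers C)"
    using layer_A(2) layer_B(2) layer_C(2) by (simp add: add_mono)
  also have "\<dots> = sum ?g (FA ` layers A \<union> FB ` layers B \<union> FC ` layers C)"
    using disjoint_AB disjoint_ABC finite by (simp add: sum.union_disjoint)
  also have "\<dots> \<le> sum ?g (oct_V n - {?u})"
    using layer_A(1) layer_B(1) layer_C(1) oct_V_finite by (intro sum_mono2) auto
  finally show ?thesis
    by (simp add: A_def B_def C_def)
qed

lemma ln_lt_layer_weights: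
  assumes "1 \<le> A + B + C"
  shows "ln (real (A + B + C) + 1) < layer_weight A + layer_weight B + layer_weight C"
proof -
  have "real (A + B + C) + 1 \<le> (real A + 1) * (real B + 1) * (real C + 1)"
    by (simp add: algebra_simps)
  then have "ln (real (A + B + C) + 1) \<le> ln ((real A + 1) * (real B + 1) * (real C + 1))"
    by simp
  also have "\<dots> = ln (real A + 1) + ln (real B + 1) + ln (real C + 1)"
    by (simp add: ln_mult)
  also have "\<dots> < layer_weight A + layer_weight B + layer_weight C"
  proof -
    have "1 \<le> of_bool (1 \<le> A) + of_bool (1 \<le> B) + (of_bool (1 \<le> C) :: real)"
      using assms by auto
    then show ?thesis
      using layer_weight_ge_ln[of A] layer_weight_ge_ln[of B] layer_weight_ge_ln[of C] by linarith
  qed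
  finally show ?thesis .
qed

theorem lemma3:
  fixes n :: nat and u :: pt
  assumes "n \<ge> 1" and "u \<in> oct_V n"
  shows "oct_Z n u < 1 / ln (real n + 1)"
proof -
  obtain a b c where u: "u = (a, b, c)"
    by (cases u)
  let ?S = "\<Sum>w\<in>oct_V n - {u}. 1 / (real (oct_dist n u w))^2"
  have n: "n = nat \<bar>a\<bar> + nat \<bar>b\<bar> + nat \<bar>c\<bar>"
    using assms(2) by (simp add: u oct_V_def)
  have "ln (real n + 1) < ?S"
    using ln_lt_layer_weights[of "nat \<bar>a\<bar>" "nat \<bar>b\<bar>" "nat \<bar>c\<bar>"]
      layer_weights_le_sum_inverse_square_oct_dist[of a b c n] assms
    by (simp add: u n)
  moreover have "0 < ln (real n + 1)"
    using assms(1) by simp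
  ultimately have "inverse ?S < inverse (ln (real n + 1))"
    by (rule less_imp_inverse_less)
  then show ?thesis
    by (simp add: oct_Z_def inverse_eq_divide)
qed

end
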